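(* Let $\mathbb{L}\in\{\mathbb{R},\mathbb{C}\}$, $n\ge1$, $c>0$, and let $\mathbf{P}^{(k)}\in\mathbb{L}^{n\times k}$ have independent columns, each uniformly distributed on the unit sphere of $\mathbb{L}^n$. Then $D_k:=\mathrm{E}\left[\det\left(\mathbf{I}_k+c\,\mathbf{P}^{(k)\dagger}\mathbf{P}^{(k)}\right)\right]$ satisfies: $D_1=1+c$; $D_2=(1+c)^2-c^2\frac{1}{n}$; $D_3=(1+c)^3-c^2(1+c)\frac{3}{n}+c^3\frac{2}{n^2}$; $D_4=(1+c)^4-c^2(1+c)^2\frac{6}{n}+c^3(1+c)\frac{8}{n^2}-c^4\left(\frac{6}{n^3}-\frac{3}{n^2}\right)$; $D_5=(1+c)^5-c^2(1+c)^3\frac{10}{n}+c^3(1+c)^2\frac{20}{n^2}-c^4(1+c)\left(\frac{30}{n^3}-\frac{15}{n^2}\right)+c^5\left(\frac{24}{n^4}-\frac{20}{n^3}\right)$.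
   Context: $\mathbf{P}^{\dagger}$ denotes the conjugate transpose (transpose if $\mathbb{L}=\mathbb{R}$). *)

theory Defs
  imports "HOL-Analysis.Analysis"
begin

text \<open>Uniform (normalized rotation-invariant surface) probability measure on the unit
  sphere of a Euclidean space: the image of the uniform distribution on the unit ball
  under radial projection x / |x| (the cone-measure construction).\<close>
definition sphere_unif :: "'a::euclidean_space measure" where
  "sphere_unif = distr (uniform_measure lborel (ball 0 1)) borel (\<lambda>x. x /\<^sub>R norm x)"

text \<open>Columns P i (i :: 'k) are independent, each uniform on the unit sphere:
  product measure.  Gram matrix G = P^dagger P has entries ip (P i) (P j).\<close>
definition exp_det ::
  "('v::euclidean_space \<Rightarrow> 'v \<Rightarrow> 'f::{real_normed_field,banach,second_countable_topology})
     \<Rightarrow> real \<Rightarrow> 'k::finite itself \<Rightarrow> 'f" where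
  "exp_det ip c _ =
     (\<integral>P. det (\<chi> (i::'k) (j::'k). (if i = j then 1 else 0) + of_real c * ip (P i) (P j))
        \<partial>(PiM (UNIV :: 'k set) (\<lambda>_. sphere_unif)))"

definition D_real :: "real \<Rightarrow> 'n::finite itself \<Rightarrow> 'k::finite itself \<Rightarrow> real" where
  "D_real c _ K = exp_det (\<lambda>(x::real^'n) y. x \<bullet> y) c K"

definition D_complex :: "real \<Rightarrow> 'n::finite itself \<Rightarrow> 'k::finite itself \<Rightarrow> complex" where
  "D_complex c _ K = exp_det (\<lambda>(x::complex^'n) y. \<Sum>l\<in>UNIV. cnj (x $ l) * y $ l) c K"

end

theory Submission
  imports Defs "HOL-Probability.Probability"
begin

text \<open>
  Write \<open>G\<close> for the Gram matrix of the columns.  Expanding \<open>det (I + cG)\<close> along the row and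
  column of the last column vector \<open>y\<close>, the determinant depends on \<open>y\<close> only through \<open>ip y y\<close>
  and the products \<open>ip p y * ip y q\<close>.  For the uniform sphere measure \<open>E[ip y y] = 1\<close> and,
  by isotropy, \<open>E[ip p y * ip y q] = ip p q / n\<close>.  After averaging over \<open>y\<close>, the first-order
  terms recombine into the determinant and its principal minors, which gives the recurrence
  \<open>D\<^sub>k\<^sub>+\<^sub>1 = (1 + c) D\<^sub>k - (c/n) k (D\<^sub>k - D\<^sub>k\<^sub>-\<^sub>1)\<close>; unrolling it yields the stated values.
\<close>

lemma emeasure_unit_ball_pos: "emeasure lborel (ball (0::'a::euclidean_space) 1) \<noteq> 0"
proof -
  have "0 < measure lborel (ball (0::'a) 1)"
    using content_ball_pos[of 1 "0::'a"] by simp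
  then show ?thesis
    using emeasure_lborel_ball_finite[of "0::'a" 1] by (simp add: emeasure_eq_ennreal_measure)
qed

lemma emeasure_unit_ball_finite: "emeasure lborel (ball (0::'a::euclidean_space) 1) \<noteq> \<infinity>"
  using emeasure_lborel_ball_finite[of "0::'a" 1] by simp

lemma prob_space_uniform_ball:
  "prob_space (uniform_measure lborel (ball (0::'a::euclidean_space) 1))"
  by (rule prob_space_uniform_measure[OF emeasure_unit_ball_pos emeasure_unit_ball_finite])

lemma sets_sphere_unif [simp]:
  "sets (sphere_unif :: 'a::euclidean_space measure) = sets borel"
  by (simp add: sphere_unif_def)

lemma measurable_sphere_unif_iff:
  "(f \<in> sphere_unif \<rightarrow>\<^sub>M N) \<longleftrightarrow> (f \<in> (borel :: 'a::euclidean_space measure) \<rightarrow>\<^sub>M N)"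
  by (metis measurable_cong_sets sets_sphere_unif)

lemma prob_space_sphere_unif: "prob_space (sphere_unif :: 'a::euclidean_space measure)"
  unfolding sphere_unif_def
  by (rule prob_space.prob_space_distr[OF prob_space_uniform_ball]) simp

text \<open>Almost every sample of the uniform sphere measure is a unit vector: radial
  projection is only undefined at the null set \<open>{0}\<close>.\<close>
lemma AE_sphere_unif_norm: "AE x in (sphere_unif :: 'a::euclidean_space measure). norm x = 1"
proof -
  let ?U = "uniform_measure lborel (ball (0::'a) 1)"
  have "AE x in ?U. norm (x /\<^sub>R norm x) = 1"
    using AE_lborel_singleton[of "0::'a"] emeasure_unit_ball_pos emeasure_unit_ball_finite
    by (subst AE_uniform_measure) (auto simp: less_top elim!: eventually_mono)
  then show ?thesis
    unfolding sphere_unif_def by (subst AE_distr_iff) simp_all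
qed

text \<open>Integrals over the uniform sphere measure are invariant under every measurable,
  norm-preserving, homogeneous map that preserves Lebesgue measure: such a map preserves the
  uniform measure on the unit ball and commutes with radial projection.\<close>
lemma distr_uniform_ball_invariant:
  fixes T :: "'a::euclidean_space \<Rightarrow> 'a"
  assumes T_meas: "T \<in> borel_measurable borel" and T_lborel: "distr lborel borel T = lborel"
    and T_norm: "\<And>x. norm (T x) = norm x"
  shows "distr (uniform_measure lborel (ball 0 1)) borel T = uniform_measure lborel (ball 0 1)"
proof (rule measure_eqI)
  fix A assume "A \<in> sets (distr (uniform_measure lborel (ball 0 1)) borel T)"
  then have A: "A \<in> sets borel" by simp
  have T_vimage: "T -` A \<in> sets borel"
    using measurable_sets[OF T_meas A] by simp
  have "emeasure lborel (ball 0 1 \<inter> T -` A) = emeasure lborel (T -` (ball 0 1 \<inter> A))"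
    using T_norm by (intro arg_cong[where f="emeasure lborel"]) auto
  also have "\<dots> = emeasure (distr lborel borel T) (ball 0 1 \<inter> A)"
    using T_meas A by (subst emeasure_distr) auto
  finally have ball_eq: "emeasure lborel (ball 0 1 \<inter> T -` A) = emeasure lborel (ball 0 1 \<inter> A)"
    by (simp add: T_lborel)
  show "emeasure (distr (uniform_measure lborel (ball 0 1)) borel T) A =
      emeasure (uniform_measure lborel (ball (0::'a) 1)) A"
    using T_meas A T_vimage ball_eq by (simp add: emeasure_distr emeasure_uniform_measure)
qed simp

lemma sphere_unif_integral_invariant:
  fixes T :: "'a::euclidean_space \<Rightarrow> 'a" and h :: "'a \<Rightarrow> real"
  assumes T_meas: "T \<in> borel_measurable borel" and T_lborel: "distr lborel borel T = lborel"
    and T_norm: "\<And>x. norm (T x) = norm x" and T_scale: "\<And>a x. T (a *\<^sub>R x) = a *\<^sub>R T x"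
    and h_meas: "h \<in> borel_measurable borel"
  shows "(\<integral>x. h (T x) \<partial>sphere_unif) = (\<integral>x. h x \<partial>sphere_unif)"
proof -
  let ?U = "uniform_measure lborel (ball (0::'a) 1)"
  let ?N = "\<lambda>x::'a. x /\<^sub>R norm x"
  have commute: "T \<circ> ?N = ?N \<circ> T" by (auto simp: T_scale T_norm)
  have "distr sphere_unif borel T = distr ?U borel (T \<circ> ?N)"
    unfolding sphere_unif_def using T_meas by (intro distr_distr) simp_all
  also have "\<dots> = distr (distr ?U borel T) borel ?N"
    unfolding commute using T_meas by (intro distr_distr[symmetric]) simp_all
  also have "\<dots> = sphere_unif"
    unfolding sphere_unif_def distr_uniform_ball_invariant[OF T_meas T_lborel T_norm] ..
  finally have "distr sphere_unif borel T = sphere_unif" .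
  then show ?thesis
    using integral_distr[of T sphere_unif borel h] T_meas h_meas
    by (simp add: measurable_sphere_unif_iff)
qed

definition basis_reflection :: "'a::euclidean_space \<Rightarrow> 'a \<Rightarrow> 'a" where
  "basis_reflection e x = x - (2 * (x \<bullet> e)) *\<^sub>R e"

definition basis_swap :: "'a::euclidean_space \<Rightarrow> 'a \<Rightarrow> 'a \<Rightarrow> 'a" where
  "basis_swap e f x = x - (x \<bullet> e) *\<^sub>R e - (x \<bullet> f) *\<^sub>R f + (x \<bullet> f) *\<^sub>R e + (x \<bullet> e) *\<^sub>R f"

lemma basis_reflection_measurable [measurable]: "basis_reflection e \<in> borel_measurable borel"
  unfolding basis_reflection_def by measurable

lemma basis_swap_measurable [measurable]: "basis_swap e f \<in> borel_measurable borel"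
  unfolding basis_swap_def by measurable

lemma inner_basis_reflection:
  "e \<in> Basis \<Longrightarrow> b \<in> Basis \<Longrightarrow> basis_reflection e x \<bullet> b = (if b = e then - (x \<bullet> b) else x \<bullet> b)"
  by (auto simp: basis_reflection_def inner_diff_left inner_Basis)

lemma inner_basis_swap:
  "e \<in> Basis \<Longrightarrow> f \<in> Basis \<Longrightarrow> e \<noteq> f \<Longrightarrow> b \<in> Basis \<Longrightarrow>
    basis_swap e f x \<bullet> b = x \<bullet> Transposition.transpose e f b"
  by (auto simp: basis_swap_def Transposition.transpose_def inner_diff_left inner_add_left inner_Basis)

lemma transpose_bij_Basis:
  "e \<in> Basis \<Longrightarrow> f \<in> Basis \<Longrightarrow> bij_betw (Transposition.transpose e f) Basis Basis"
  by (rule bij_betw_byWitness[where f'="Transposition.transpose e f"]) (auto simp: Transposition.transpose_def)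

lemma basis_reflection_scale: "basis_reflection e (a *\<^sub>R x) = a *\<^sub>R basis_reflection e x"
  by (simp add: basis_reflection_def algebra_simps)

lemma basis_swap_scale: "basis_swap e f (a *\<^sub>R x) = a *\<^sub>R basis_swap e f x"
  by (simp add: basis_swap_def algebra_simps)

lemma norm_basis_reflection: "e \<in> Basis \<Longrightarrow> norm (basis_reflection e x) = norm x"
  by (simp add: norm_eq_sqrt_inner basis_reflection_def inner_diff_left inner_diff_right
      algebra_simps inner_commute)

lemma norm_basis_swap:
  assumes "e \<in> Basis" "f \<in> Basis" "e \<noteq> f"
  shows "norm (basis_swap e f x) = norm x"
proof -
  let ?t = "Transposition.transpose e f"
  have "basis_swap e f x \<bullet> basis_swap e f x = (\<Sum>b\<in>Basis. (x \<bullet> ?t b) * (x \<bullet> ?t b))"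
    by (subst euclidean_inner) (intro sum.cong refl, simp add: assms inner_basis_swap)
  also have "\<dots> = (\<Sum>b\<in>Basis. (x \<bullet> b) * (x \<bullet> b))"
    using sum.reindex_bij_betw[OF transpose_bij_Basis[OF assms(1,2)], of "\<lambda>b. (x \<bullet> b) * (x \<bullet> b)"] by simp
  also have "\<dots> = x \<bullet> x" by (rule euclidean_inner[symmetric])
  finally show ?thesis by (simp add: norm_eq_sqrt_inner)
qed

text \<open>A reflection is an affine map with diagonal \<open>\<plusminus>1\<close>, so it preserves Lebesgue measure.\<close>
lemma distr_lborel_basis_reflection:
  assumes e: "e \<in> Basis"
  shows "distr lborel borel (basis_reflection e) = lborel"
proof -
  define s where "s j = (if j = e then -1 else (1::real))" for j :: 'a
  have affine: "(\<lambda>x. 0 + (\<Sum>j\<in>Basis. (s j * (x \<bullet> j)) *\<^sub>R j)) = basis_reflection e"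
  proof
    fix x :: 'a
    have "(\<Sum>j\<in>Basis. (s j * (x \<bullet> j)) *\<^sub>R j) =
        (\<Sum>j\<in>Basis. (x \<bullet> j) *\<^sub>R j - (if j = e then (2 * (x \<bullet> j)) *\<^sub>R j else 0))"
      by (rule sum.cong) (auto simp: s_def scaleR_left_diff_distrib[symmetric])
    also have "\<dots> = x - (2 * (x \<bullet> e)) *\<^sub>R e"
      using e by (simp add: sum_subtractf euclidean_representation)
    finally show "0 + (\<Sum>j\<in>Basis. (s j * (x \<bullet> j)) *\<^sub>R j) = basis_reflection e x"
      by (simp add: basis_reflection_def)
  qed
  have "lborel = density (distr lborel borel (basis_reflection e)) (\<lambda>_. (\<Prod>j\<in>Basis. \<bar>s j\<bar>))"
    using lborel_affine_euclidean[of s 0] affine by (simp add: s_def)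
  also have "(\<Prod>j\<in>Basis. \<bar>s j\<bar>) = 1" by (rule prod.neutral) (simp add: s_def)
  finally show ?thesis by (simp add: density_1)
qed

text \<open>A swap of two coordinates maps boxes to boxes of the same volume.\<close>
lemma distr_lborel_basis_swap:
  assumes ef: "e \<in> Basis" "f \<in> Basis" "e \<noteq> f"
  shows "distr lborel borel (basis_swap e f) = lborel"
proof (rule lborel_eqI[symmetric])
  let ?S = "basis_swap e f" and ?t = "Transposition.transpose e f"
  have t_Basis: "b \<in> Basis \<Longrightarrow> ?t b \<in> Basis" and t_t: "?t (?t b) = b" for b
    using ef by (auto simp: Transposition.transpose_def)
  fix l u :: 'a assume le: "\<And>b. b \<in> Basis \<Longrightarrow> l \<bullet> b \<le> u \<bullet> b"
  have "x \<in> ?S -` box l u \<longleftrightarrow> x \<in> box (?S l) (?S u)" for x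
  proof -
    have "x \<in> ?S -` box l u \<longleftrightarrow> (\<forall>b\<in>Basis. l \<bullet> b < x \<bullet> ?t b \<and> x \<bullet> ?t b < u \<bullet> b)"
      using ef by (simp add: mem_box inner_basis_swap)
    also have "\<dots> \<longleftrightarrow> (\<forall>b\<in>Basis. l \<bullet> ?t b < x \<bullet> b \<and> x \<bullet> b < u \<bullet> ?t b)"
      using t_Basis t_t by metis
    also have "\<dots> \<longleftrightarrow> x \<in> box (?S l) (?S u)"
      using ef by (simp add: mem_box inner_basis_swap)
    finally show ?thesis .
  qed
  then have vimage_box: "?S -` box l u = box (?S l) (?S u)" by blast
  have le_swapped: "\<forall>b\<in>Basis. ?S l \<bullet> b \<le> ?S u \<bullet> b"
    using ef le t_Basis by (simp add: inner_basis_swap)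
  have "emeasure (distr lborel borel ?S) (box l u) = emeasure lborel (box (?S l) (?S u))"
    by (simp add: emeasure_distr vimage_box)
  also have "\<dots> = (\<Prod>b\<in>Basis. (u - l) \<bullet> ?t b)"
    using le_swapped ef by (simp add: emeasure_lborel_box_eq inner_diff_left inner_basis_swap)
  also have "(\<Prod>b\<in>Basis. (u - l) \<bullet> ?t b) = (\<Prod>b\<in>Basis. (u - l) \<bullet> b)"
    using prod.reindex_bij_betw[OF transpose_bij_Basis[OF ef(1,2)], of "\<lambda>b. (u - l) \<bullet> b"] by simp
  finally show "emeasure (distr lborel borel ?S) (box l u) = (\<Prod>b\<in>Basis. (u - l) \<bullet> b)" .
qed simp

lemma sphere_unif_integrable_bounded:
  fixes h :: "'a::euclidean_space \<Rightarrow> 'b::{banach,second_countable_topology}"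
  assumes h_meas: "h \<in> borel_measurable borel" and h_bound: "\<And>x. norm x = 1 \<Longrightarrow> norm (h x) \<le> B"
  shows "integrable sphere_unif h"
proof -
  interpret prob_space "sphere_unif :: 'a measure" by (rule prob_space_sphere_unif)
  show ?thesis
    by (rule integrable_const_bound[where B=B])
       (use AE_sphere_unif_norm h_bound h_meas in \<open>auto simp: measurable_sphere_unif_iff elim!: eventually_mono\<close>)
qed

lemma sphere_unif_integrable_coord_product:
  "integrable (sphere_unif :: 'a::euclidean_space measure) (\<lambda>x. (x \<bullet> u) * (x \<bullet> v))"
proof (rule sphere_unif_integrable_bounded[where B="norm u * norm v"])
  fix x :: 'a assume x: "norm x = 1"
  have "\<bar>x \<bullet> u\<bar> * \<bar>x \<bullet> v\<bar> \<le> (norm x * norm u) * (norm x * norm v)"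
    by (intro mult_mono Cauchy_Schwarz_ineq2) auto
  then show "norm ((x \<bullet> u) * (x \<bullet> v)) \<le> norm u * norm v" using x by (simp add: abs_mult)
qed simp

text \<open>Second moments of the coordinates: they are uncorrelated (reflect one coordinate)
  and all have the same variance (swap two coordinates), which sums to \<open>E |x|\<^sup>2 = 1\<close>.\<close>
lemma sphere_unif_coord_moment:
  fixes e f :: "'a::euclidean_space"
  assumes e: "e \<in> Basis" and f: "f \<in> Basis"
  shows "(\<integral>x. (x \<bullet> e) * (x \<bullet> f) \<partial>(sphere_unif :: 'a measure)) = (if e = f then 1 / DIM('a) else 0)"
proof (cases "e = f")
  case False
  have "(\<integral>x. (x \<bullet> e) * (x \<bullet> f) \<partial>(sphere_unif :: 'a measure)) =
      (\<integral>x. (basis_reflection e x \<bullet> e) * (basis_reflection e x \<bullet> f) \<partial>sphere_unif)"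
    by (rule sphere_unif_integral_invariant[where h="\<lambda>x. (x \<bullet> e) * (x \<bullet> f)", symmetric])
       (auto simp: distr_lborel_basis_reflection e norm_basis_reflection basis_reflection_scale)
  also have "\<dots> = - (\<integral>x. (x \<bullet> e) * (x \<bullet> f) \<partial>(sphere_unif :: 'a measure))"
    using e f False by (simp add: inner_basis_reflection)
  finally show ?thesis using False by simp
next
  case True
  interpret prob_space "sphere_unif :: 'a measure" by (rule prob_space_sphere_unif)
  define m where "m b = (\<integral>x. (x \<bullet> b) * (x \<bullet> b) \<partial>(sphere_unif :: 'a measure))" for b
  have same_variance: "m b = m e" if b: "b \<in> Basis" for b
  proof (cases "b = e")
    case False
    have "m e = (\<integral>x. (basis_swap e b x \<bullet> e) * (basis_swap e b x \<bullet> e) \<partial>sphere_unif)"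
      unfolding m_def
      by (rule sphere_unif_integral_invariant[where h="\<lambda>x. (x \<bullet> e) * (x \<bullet> e)", symmetric])
         (use False e b in \<open>auto simp: distr_lborel_basis_swap norm_basis_swap basis_swap_scale\<close>)
    also have "\<dots> = m b"
      unfolding m_def using e b False by (simp add: inner_basis_swap Transposition.transpose_def)
    finally show ?thesis by simp
  qed simp
  have "(\<Sum>b\<in>Basis. m b) = (\<integral>x. (\<Sum>b\<in>(Basis::'a set). (x \<bullet> b) * (x \<bullet> b)) \<partial>sphere_unif)"
    unfolding m_def by (simp add: sphere_unif_integrable_coord_product)
  also have "\<dots> = (\<integral>x. 1 \<partial>(sphere_unif :: 'a measure))"
  proof (rule integral_cong_AE)
    show "AE x in sphere_unif. (\<Sum>b\<in>(Basis::'a set). (x \<bullet> b) * (x \<bullet> b)) = 1"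
      using AE_sphere_unif_norm by (auto elim!: eventually_mono
          simp: euclidean_inner[symmetric] power2_norm_eq_inner[symmetric])
  qed (auto simp: measurable_sphere_unif_iff)
  also have "\<dots> = 1" by (simp add: prob_space)
  finally have "real DIM('a) * m e = 1" using same_variance by simp
  then show ?thesis using True by (simp add: m_def field_simps)
qed

lemma sphere_unif_second_moment:
  fixes u v :: "'a::euclidean_space"
  shows "(\<integral>x. (x \<bullet> u) * (x \<bullet> v) \<partial>sphere_unif) = (u \<bullet> v) / DIM('a)"
proof -
  have expand: "(x \<bullet> u) * (x \<bullet> v) =
      (\<Sum>b\<in>Basis. \<Sum>b'\<in>Basis. ((u \<bullet> b) * (v \<bullet> b')) * ((x \<bullet> b) * (x \<bullet> b')))" for x :: 'a
    unfolding euclidean_inner[of x u] euclidean_inner[of x v] sum_product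
    by (intro sum.cong refl) (simp only: mult_ac inner_commute)
  have "(\<integral>x. (x \<bullet> u) * (x \<bullet> v) \<partial>sphere_unif) =
      (\<Sum>b\<in>Basis. \<Sum>b'\<in>Basis. ((u \<bullet> b) * (v \<bullet> b')) * (\<integral>x. (x \<bullet> b) * (x \<bullet> b') \<partial>(sphere_unif :: 'a measure)))"
    unfolding expand by (simp add: sphere_unif_integrable_coord_product)
  also have "\<dots> = (\<Sum>b\<in>Basis. (u \<bullet> b) * (v \<bullet> b)) / DIM('a)"
    by (simp add: sphere_unif_coord_moment if_distrib sum_divide_distrib cong: if_cong)
  also have "\<dots> = (u \<bullet> v) / DIM('a)" by (simp only: euclidean_inner[of u v])
  finally show ?thesis .
qed

definition leibniz_det :: "'k set \<Rightarrow> ('k \<Rightarrow> 'k \<Rightarrow> 'a::comm_ring_1) \<Rightarrow> 'a" where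
  "leibniz_det K A = (\<Sum>p\<in>{p. p permutes K}. of_int (sign p) * (\<Prod>i\<in>K. A i (p i)))"

lemma leibniz_det_empty [simp]: "leibniz_det {} A = 1"
  by (simp add: leibniz_det_def)

lemma leibniz_det_cong:
  assumes "\<And>i j. i \<in> K \<Longrightarrow> j \<in> K \<Longrightarrow> A i j = B i j"
  shows "leibniz_det K A = leibniz_det K B"
  unfolding leibniz_det_def using assms
  by (intro sum.cong refl arg_cong2[where f="(*)"] prod.cong) (auto simp: permutes_in_image)

lemma sign_transpose_comp:
  assumes q: "q permutes K" and K: "finite K" and ab: "a \<noteq> b"
  shows "sign (Transposition.transpose a b \<circ> q) = - sign q"
proof -
  have "permutation q" using q K permutation_permutes by blast
  then show ?thesis
    using sign_compose[OF permutation_swap_id, of q a b] ab by (simp add: sign_swap_id)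
qed

lemma prod_transpose_comp:
  assumes q: "q permutes K" and K: "finite K" and a: "a \<notin> K" and b: "b \<in> K"
  shows "(\<Prod>i\<in>insert a K. A i ((Transposition.transpose a b \<circ> q) i)) =
    A a b * A (inv q b) a * (\<Prod>i\<in>K - {inv q b}. A i (q i))"
proof -
  define j where "j = inv q b"
  have j: "j \<in> K" unfolding j_def using permutes_in_image[OF permutes_inv[OF q]] b by simp
  have qj: "q j = b" unfolding j_def using permutes_inverses[OF q] by simp
  have qa: "q a = a" using permutes_not_in[OF q a] .
  have other_rows: "A i ((Transposition.transpose a b \<circ> q) i) = A i (q i)" if i: "i \<in> K - {j}" for i
  proof -
    have "q i \<noteq> b" using i qj permutes_inj[OF q] by (auto dest: injD)
    moreover have "q i \<noteq> a" using i a permutes_in_image[OF q, of i] by auto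
    ultimately show ?thesis by (simp add: Transposition.transpose_def)
  qed
  have "(\<Prod>i\<in>insert a K. A i ((Transposition.transpose a b \<circ> q) i)) =
      A a b * (A j a * (\<Prod>i\<in>K - {j}. A i ((Transposition.transpose a b \<circ> q) i)))"
    using K a qa j qj by (simp add: prod.insert prod.remove)
  also have "\<dots> = A a b * A j a * (\<Prod>i\<in>K - {j}. A i (q i))"
    using other_rows by (simp add: mult.assoc)
  finally show ?thesis by (simp add: j_def)
qed

lemma leibniz_det_insert:
  assumes K: "finite K" and a: "a \<notin> K"
  shows "leibniz_det (insert a K) A = A a a * leibniz_det K A -
    (\<Sum>q\<in>{q. q permutes K}. \<Sum>j\<in>K. of_int (sign q) * (A a (q j) * A j a) * (\<Prod>i\<in>K - {j}. A i (q i)))"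
proof -
  let ?Q = "{q. q permutes K}"
  let ?f = "\<lambda>p. of_int (sign p) * (\<Prod>i\<in>insert a K. A i (p i))"
  let ?g = "\<lambda>q b. of_int (sign q) * (A a b * A (inv q b) a) * (\<Prod>i\<in>K - {inv q b}. A i (q i))"
  have "leibniz_det (insert a K) A = (\<Sum>b\<in>insert a K. \<Sum>q\<in>?Q. ?f (Transposition.transpose a b \<circ> q))"
    unfolding leibniz_det_def by (rule sum_over_permutations_insert[OF K a])
  also have "\<dots> = (\<Sum>q\<in>?Q. ?f q) + (\<Sum>b\<in>K. \<Sum>q\<in>?Q. ?f (Transposition.transpose a b \<circ> q))"
    using K a by (simp add: sum.insert)
  also have "(\<Sum>q\<in>?Q. ?f q) = A a a * leibniz_det K A"
    unfolding leibniz_det_def sum_distrib_left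
    using K a by (intro sum.cong refl) (auto simp: prod.insert permutes_not_in mult_ac)
  also have "(\<Sum>b\<in>K. \<Sum>q\<in>?Q. ?f (Transposition.transpose a b \<circ> q)) = - (\<Sum>q\<in>?Q. \<Sum>b\<in>K. ?g q b)"
  proof -
    have "?f (Transposition.transpose a b \<circ> q) = - ?g q b" if "b \<in> K" "q permutes K" for b q
    proof -
      have "a \<noteq> b" using a that(1) by auto
      then show ?thesis
        using sign_transpose_comp[OF that(2) K] prod_transpose_comp[OF that(2) K a that(1), of A]
        by (simp add: mult_ac)
    qed
    then show ?thesis by (simp add: sum_negf sum.swap[of _ K])
  qed
  also have "(\<Sum>q\<in>?Q. \<Sum>b\<in>K. ?g q b) =
      (\<Sum>q\<in>?Q. \<Sum>j\<in>K. of_int (sign q) * (A a (q j) * A j a) * (\<Prod>i\<in>K - {j}. A i (q i)))"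
  proof (rule sum.cong[OF refl])
    fix q assume "q \<in> ?Q"
    then have q: "q permutes K" by simp
    have "(\<Sum>b\<in>K. ?g q b) = (\<Sum>j\<in>K. ?g q (q j))"
      by (rule sum.reindex_bij_betw[OF permutes_imp_bij[OF q], symmetric])
    then show "(\<Sum>b\<in>K. ?g q b) =
        (\<Sum>j\<in>K. of_int (sign q) * (A a (q j) * A j a) * (\<Prod>i\<in>K - {j}. A i (q i)))"
      using permutes_inverses[OF q] by simp
  qed
  finally show ?thesis by simp
qed

text \<open>For a matrix \<open>A = I + B\<close>, summing the first-order terms \<open>B j (q j)\<close> against the
  complementary products yields \<open>|K| det A\<close> minus the principal minors of order \<open>|K| - 1\<close>:
  the identity part of \<open>A j (q j)\<close> survives exactly when \<open>q\<close> fixes \<open>j\<close>.\<close>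
lemma leibniz_det_first_order_terms:
  fixes B :: "'k \<Rightarrow> 'k \<Rightarrow> 'a::comm_ring_1"
  defines "A \<equiv> \<lambda>i j. (if i = j then 1 else 0) + B i j"
  assumes K: "finite K"
  shows "(\<Sum>q\<in>{q. q permutes K}. \<Sum>j\<in>K. of_int (sign q) * B j (q j) * (\<Prod>i\<in>K - {j}. A i (q i))) =
    of_nat (card K) * leibniz_det K A - (\<Sum>j\<in>K. leibniz_det (K - {j}) A)"
proof -
  let ?Q = "{q. q permutes K}"
  let ?R = "\<lambda>q j. of_int (sign q) * (\<Prod>i\<in>K - {j}. A i (q i))"
  have split: "of_int (sign q) * B j (q j) * (\<Prod>i\<in>K - {j}. A i (q i)) =
      of_int (sign q) * (\<Prod>i\<in>K. A i (q i)) - (if q j = j then ?R q j else 0)"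
    if "j \<in> K" for q j
  proof -
    have "(\<Prod>i\<in>K. A i (q i)) = A j (q j) * (\<Prod>i\<in>K - {j}. A i (q i))"
      using K that by (simp add: prod.remove)
    then show ?thesis by (auto simp: A_def algebra_simps)
  qed
  have fixing_j: "(\<Sum>q\<in>?Q. if q j = j then ?R q j else 0) = leibniz_det (K - {j}) A"
    if j: "j \<in> K" for j
  proof -
    have "{q \<in> ?Q. q j = j} = {q. q permutes K - {j}}"
    proof -
      have "q permutes K - {j}" if "q permutes K" "q j = j" for q
        using that unfolding permutes_def by (metis Diff_iff singletonD)
      moreover have "q permutes K \<and> q j = j" if "q permutes K - {j}" for q
        using that permutes_subset[OF that, of K] permutes_not_in[OF that, of j] by auto
      ultimately show ?thesis by blast
    qed
    then show ?thesis
      using sum.inter_filter[OF finite_permutations[OF K], where g="\<lambda>q. ?R q j" and P="\<lambda>q. q j = j"]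
      by (simp add: leibniz_det_def)
  qed
  have "(\<Sum>q\<in>?Q. \<Sum>j\<in>K. of_int (sign q) * B j (q j) * (\<Prod>i\<in>K - {j}. A i (q i))) =
      (\<Sum>q\<in>?Q. \<Sum>j\<in>K. of_int (sign q) * (\<Prod>i\<in>K. A i (q i))) -
      (\<Sum>j\<in>K. \<Sum>q\<in>?Q. if q j = j then ?R q j else 0)"
    by (simp add: split sum_subtractf sum.swap[of _ ?Q] cong: sum.cong)
  also have "\<dots> = of_nat (card K) * leibniz_det K A - (\<Sum>j\<in>K. leibniz_det (K - {j}) A)"
    by (simp add: fixing_j leibniz_det_def sum_distrib_left)
  finally show ?thesis .
qed

lemma norm_leibniz_det_le:
  fixes A :: "'k \<Rightarrow> 'k \<Rightarrow> 'a::{real_normed_div_algebra,comm_ring_1}"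
  assumes K: "finite K" and bound: "\<And>i j. i \<in> K \<Longrightarrow> j \<in> K \<Longrightarrow> norm (A i j) \<le> B"
  shows "norm (leibniz_det K A) \<le> fact (card K) * B ^ card K"
proof -
  have "norm (of_int (sign p) * (\<Prod>i\<in>K. A i (p i)) :: 'a) \<le> B ^ card K" if p: "p permutes K" for p
  proof -
    have "norm (of_int (sign p) * (\<Prod>i\<in>K. A i (p i)) :: 'a) = (\<Prod>i\<in>K. norm (A i (p i)))"
      by (simp add: norm_mult prod_norm sign_def)
    also have "\<dots> \<le> (\<Prod>i\<in>K. B)"
      by (intro prod_mono conjI norm_ge_zero bound) (use p permutes_in_image[OF p] in auto)
    finally show ?thesis by simp
  qed
  then have "norm (leibniz_det K A) \<le> (\<Sum>p\<in>{p. p permutes K}. B ^ card K)"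
    unfolding leibniz_det_def by (intro order.trans[OF norm_sum] sum_mono) auto
  then show ?thesis by (simp add: card_permutations[OF refl K])
qed

definition id_plus_gram ::
  "('v \<Rightarrow> 'v \<Rightarrow> 'f::real_normed_field) \<Rightarrow> real \<Rightarrow> ('k \<Rightarrow> 'v) \<Rightarrow> 'k \<Rightarrow> 'k \<Rightarrow> 'f" where
  "id_plus_gram ip c P i j = (if i = j then 1 else 0) + of_real c * ip (P i) (P j)"

lemma det_id_plus_gram_insert:
  assumes K: "finite K" and a: "a \<notin> K"
  shows "leibniz_det (insert a K) (id_plus_gram ip c (P(a := y))) =
    (1 + of_real c * ip y y) * leibniz_det K (id_plus_gram ip c P) -
    of_real c * of_real c * (\<Sum>q\<in>{q. q permutes K}. \<Sum>j\<in>K. of_int (sign q) *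
       (ip (P j) y * ip y (P (q j))) * (\<Prod>i\<in>K - {j}. id_plus_gram ip c P i (q i)))"
proof -
  let ?G = "id_plus_gram ip c P" and ?G' = "id_plus_gram ip c (P(a := y))"
  have same_minor: "?G' i j = ?G i j" if "i \<in> K" "j \<in> K" for i j
    using that a by (auto simp: id_plus_gram_def)
  have minor: "(\<Prod>i\<in>K - {j}. ?G' i (q i)) = (\<Prod>i\<in>K - {j}. ?G i (q i))" if "q permutes K" for q j
    using same_minor permutes_in_image[OF that] by (intro prod.cong) auto
  have new_entries:
    "s * (?G' a (q j) * ?G' j a) * r = of_real c * of_real c * (s * (ip (P j) y * ip y (P (q j))) * r)"
    if "q permutes K" "j \<in> K" for q j s r
    using that a permutes_in_image[OF that(1), of j] by (auto simp: id_plus_gram_def mult_ac)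
  have "(\<Sum>q\<in>{q. q permutes K}. \<Sum>j\<in>K. of_int (sign q) * (?G' a (q j) * ?G' j a) *
          (\<Prod>i\<in>K - {j}. ?G' i (q i))) =
      of_real c * of_real c * (\<Sum>q\<in>{q. q permutes K}. \<Sum>j\<in>K. of_int (sign q) *
          (ip (P j) y * ip y (P (q j))) * (\<Prod>i\<in>K - {j}. ?G i (q i)))"
    unfolding sum_distrib_left by (intro sum.cong refl) (simp add: minor new_entries)
  moreover have "leibniz_det K ?G' = leibniz_det K ?G"
    by (rule leibniz_det_cong) (rule same_minor)
  moreover have "?G' a a = 1 + of_real c * ip y y"
    by (simp add: id_plus_gram_def)
  ultimately show ?thesis
    unfolding leibniz_det_insert[OF K a, of ?G'] by simp
qed

fun D_seq :: "real \<Rightarrow> real \<Rightarrow> nat \<Rightarrow> real" where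
  "D_seq n c 0 = 1"
| "D_seq n c (Suc m) = (1 + c) * D_seq n c m - c / n * real m * (D_seq n c m - D_seq n c (m - 1))"

locale isotropic_distribution =
  fixes S :: "'v measure" and ip :: "'v \<Rightarrow> 'v \<Rightarrow> 'f::{real_normed_field,banach,second_countable_topology}"
    and n :: real
  assumes prob_space_S: "prob_space S"
    and AE_unit: "AE x in S. ip x x = 1"
    and cauchy_schwarz: "\<And>x y. norm (ip x y) ^ 2 \<le> norm (ip x x) * norm (ip y y)"
    and ip_measurable: "(\<lambda>(x, y). ip x y) \<in> borel_measurable (S \<Otimes>\<^sub>M S)"
    and moment_integrable: "\<And>u w. integrable S (\<lambda>x. ip u x * ip x w)"
    and second_moment: "\<And>u w. (\<integral>x. ip u x * ip x w \<partial>S) = ip u w / of_real n"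
begin

lemma prob_space_PiM_S: "prob_space (PiM J (\<lambda>_. S))"
  by (rule prob_space_PiM) (simp add: prob_space_S)

sublocale product_S: product_sigma_finite "\<lambda>_. S"
  unfolding product_sigma_finite_def using prob_space_imp_sigma_finite[OF prob_space_S] by simp

lemma ip_measurable_compose:
  "f \<in> M \<rightarrow>\<^sub>M S \<Longrightarrow> g \<in> M \<rightarrow>\<^sub>M S \<Longrightarrow> (\<lambda>x. ip (f x) (g x)) \<in> borel_measurable M"
  using measurable_compose[OF measurable_Pair[of f M S g S] ip_measurable] by simp

lemma ip_unit_bound: "ip x x = 1 \<Longrightarrow> ip y y = 1 \<Longrightarrow> norm (ip x y) \<le> 1"
  using cauchy_schwarz[of x y] by (simp add: power_le_one_iff)

lemma integral_ip_self: "(\<integral>y. ip y y \<partial>S) = 1" and integrable_ip_self: "integrable S (\<lambda>y. ip y y)"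
proof -
  interpret prob_space S by (rule prob_space_S)
  have meas: "(\<lambda>y. ip y y) \<in> borel_measurable S"
    by (rule ip_measurable_compose) simp_all
  show "(\<integral>y. ip y y \<partial>S) = 1"
    using AE_unit meas by (subst integral_cong_AE[where g="\<lambda>_. 1"]) (auto simp: prob_space)
  show "integrable S (\<lambda>y. ip y y)"
    using AE_unit meas by (intro integrable_const_bound[where B=1]) (auto elim!: eventually_mono)
qed

abbreviation gram_det :: "real \<Rightarrow> 'k set \<Rightarrow> ('k \<Rightarrow> 'v) \<Rightarrow> 'f" where
  "gram_det c K P \<equiv> leibniz_det K (id_plus_gram ip c P)"

lemma gram_det_measurable:
  "K \<subseteq> J \<Longrightarrow> (\<lambda>P. gram_det c K P) \<in> borel_measurable (PiM J (\<lambda>_. S))"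
  unfolding leibniz_det_def id_plus_gram_def
  by (intro borel_measurable_sum borel_measurable_times borel_measurable_const borel_measurable_prod
      borel_measurable_add ip_measurable_compose measurable_component_singleton)
     (auto simp: permutes_in_image)

text \<open>Almost surely all columns are unit vectors, so all entries of \<open>I + cG\<close> are bounded by
  \<open>1 + |c|\<close> and the determinant is bounded, hence integrable.\<close>
lemma gram_det_integrable:
  assumes J: "finite J" and KJ: "K \<subseteq> J"
  shows "integrable (PiM J (\<lambda>_. S)) (gram_det c K)"
proof -
  interpret prob_space "PiM J (\<lambda>_. S)" by (rule prob_space_PiM_S)
  have K: "finite K" using finite_subset[OF KJ J] .
  have "AE P in PiM J (\<lambda>_. S). \<forall>i\<in>J. ip (P i) (P i) = 1"
    using J by (intro eventually_ball_finite ballI AE_PiM_component prob_space_S AE_unit) auto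
  moreover have "norm (gram_det c K P) \<le> fact (card K) * (1 + \<bar>c\<bar>) ^ card K"
    if "\<forall>i\<in>J. ip (P i) (P i) = 1" for P
  proof (rule norm_leibniz_det_le[OF K])
    fix i j assume "i \<in> K" "j \<in> K"
    then have "norm (ip (P i) (P j)) \<le> 1" using that KJ by (intro ip_unit_bound) auto
    then show "norm (id_plus_gram ip c P i j) \<le> 1 + \<bar>c\<bar>"
      unfolding id_plus_gram_def
      by (intro order.trans[OF norm_triangle_ineq] add_mono) (auto simp: norm_mult mult_left_le)
  qed
  ultimately show ?thesis
    using gram_det_measurable[OF KJ]
    by (intro integrable_const_bound[where B="fact (card K) * (1 + \<bar>c\<bar>) ^ card K"])
       (auto elim!: eventually_mono)
qed

text \<open>Columns outside \<open>K\<close> do not influence the \<open>K\<close>-determinant.\<close>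
lemma integral_gram_det_marginal:
  assumes K: "finite K" and j: "j \<notin> K"
  shows "integral\<^sup>L (PiM (insert j K) (\<lambda>_. S)) (gram_det c K) = integral\<^sup>L (PiM K (\<lambda>_. S)) (gram_det c K)"
proof -
  interpret prob_space S by (rule prob_space_S)
  have "gram_det c K (P(j := y)) = gram_det c K P" for P y
    using j by (intro leibniz_det_cong) (auto simp: id_plus_gram_def)
  then show ?thesis
    using K j by (subst product_S.product_integral_insert[OF K j gram_det_integrable]) (auto simp: prob_space)
qed

text \<open>The key step: averaging over a new column \<open>y\<close> uses \<open>E[ip y y] = 1\<close> and isotropy, and
  the first-order terms recombine into principal minors.\<close>
lemma integral_gram_det_new_column:
  assumes K: "finite K" and a: "a \<notin> K"
  shows "(\<integral>y. gram_det c (insert a K) (P(a := y)) \<partial>S) =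
    (1 + of_real c) * gram_det c K P -
    of_real c / of_real n * (of_nat (card K) * gram_det c K P - (\<Sum>j\<in>K. gram_det c (K - {j}) P))"
proof -
  let ?Q = "{q. q permutes K}"
  define R where "R q j = of_int (sign q) * (\<Prod>i\<in>K - {j}. id_plus_gram ip c P i (q i))" for q j
  define L where "L = gram_det c K P"
  have expand: "gram_det c (insert a K) (P(a := y)) = L + (of_real c * L) * ip y y -
      of_real c * of_real c * (\<Sum>q\<in>?Q. \<Sum>j\<in>K. R q j * (ip (P j) y * ip y (P (q j))))" for y
    unfolding det_id_plus_gram_insert[OF K a] L_def R_def by (simp add: algebra_simps)
  have "(\<integral>y. gram_det c (insert a K) (P(a := y)) \<partial>S) =
      L + of_real c * L - of_real c * of_real c * (\<Sum>q\<in>?Q. \<Sum>j\<in>K. R q j * (ip (P j) (P (q j)) / of_real n))"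
  proof -
    interpret prob_space S by (rule prob_space_S)
    have int_diag: "integrable S (\<lambda>y. L + (of_real c * L) * ip y y)"
      using integrable_ip_self by simp
    have int_off: "integrable S (\<lambda>y. of_real c * of_real c * (\<Sum>q\<in>?Q. \<Sum>j\<in>K. R q j * (ip (P j) y * ip y (P (q j)))))"
      using moment_integrable by simp
    show ?thesis
      unfolding expand Bochner_Integration.integral_diff[OF int_diag int_off]
      using integrable_ip_self integral_ip_self moment_integrable second_moment by (simp add: prob_space)
  qed
  also have "of_real c * of_real c * (\<Sum>q\<in>?Q. \<Sum>j\<in>K. R q j * (ip (P j) (P (q j)) / of_real n)) =
      of_real c / of_real n * (\<Sum>q\<in>?Q. \<Sum>j\<in>K. of_int (sign q) * (of_real c * ip (P j) (P (q j))) *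
        (\<Prod>i\<in>K - {j}. id_plus_gram ip c P i (q i)))"
    unfolding sum_distrib_left R_def by (intro sum.cong refl) (simp add: divide_inverse mult_ac)
  also have "\<dots> = of_real c / of_real n * (of_nat (card K) * L - (\<Sum>j\<in>K. gram_det c (K - {j}) P))"
    using leibniz_det_first_order_terms[OF K, of "\<lambda>i j. of_real c * ip (P i) (P j)"]
    by (simp add: L_def id_plus_gram_def[abs_def])
  finally have "(\<integral>y. gram_det c (insert a K) (P(a := y)) \<partial>S) = L + of_real c * L -
    of_real c / of_real n * (of_nat (card K) * L - (\<Sum>j\<in>K. gram_det c (K - {j}) P))" .
  then show ?thesis by (simp only: L_def algebra_simps mult_1_left)
qed

theorem expected_gram_det:
  assumes "finite K"
  shows "integral\<^sup>L (PiM K (\<lambda>_. S)) (gram_det c K) = of_real (D_seq n c (card K))"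
  using assms
proof (induction "card K" arbitrary: K rule: less_induct)
  case less
  show ?case
  proof (cases "K = {}")
    case True
    then show ?thesis by (simp add: prob_space.prob_space[OF prob_space_PiM_S])
  next
    case False
    then obtain a where "a \<in> K" by auto
    define K' where "K' = K - {a}"
    have K: "K = insert a K'" "a \<notin> K'" "finite K'"
      using \<open>a \<in> K\<close> less.prems by (auto simp: K'_def)
    define m where "m = card K'"
    have card_K: "card K = Suc m" using K by (simp add: m_def)
    have IH_K': "integral\<^sup>L (PiM K' (\<lambda>_. S)) (gram_det c K') = of_real (D_seq n c m)"
      using less.hyps[of K'] K card_K m_def by simp
    have IH_minor: "integral\<^sup>L (PiM K' (\<lambda>_. S)) (gram_det c (K' - {j})) = of_real (D_seq n c (m - 1))"
      if j: "j \<in> K'" for j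
    proof -
      have "insert j (K' - {j}) = K'" using j by auto
      then have "integral\<^sup>L (PiM K' (\<lambda>_. S)) (gram_det c (K' - {j})) =
          integral\<^sup>L (PiM (K' - {j}) (\<lambda>_. S)) (gram_det c (K' - {j}))"
        using integral_gram_det_marginal[of "K' - {j}" j] K by simp
      also have "\<dots> = of_real (D_seq n c (m - 1))"
        using less.hyps[of "K' - {j}"] K card_K j by (simp add: card_Diff1_less m_def)
      finally show ?thesis .
    qed
    have "integral\<^sup>L (PiM K (\<lambda>_. S)) (gram_det c K) =
        (\<integral>P. (\<integral>y. gram_det c (insert a K') (P(a := y)) \<partial>S) \<partial>PiM K' (\<lambda>_. S))"
      unfolding K(1) by (rule product_S.product_integral_insert[OF K(3,2) gram_det_integrable]) (use K in auto)
    also have "\<dots> = (\<integral>P. (1 + of_real c) * gram_det c K' P - of_real c / of_real n *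
        (of_nat m * gram_det c K' P - (\<Sum>j\<in>K'. gram_det c (K' - {j}) P)) \<partial>PiM K' (\<lambda>_. S))"
      by (simp only: integral_gram_det_new_column[OF K(3,2)] m_def)
    also have "\<dots> = (1 + of_real c) * of_real (D_seq n c m) - of_real c / of_real n *
        (of_nat m * of_real (D_seq n c m) - (\<Sum>j\<in>K'. of_real (D_seq n c (m - 1))))"
      using gram_det_integrable[OF K(3)] IH_K' IH_minor by (simp add: Diff_subset)
    also have "\<dots> = of_real (D_seq n c (card K))"
      by (simp add: card_K m_def algebra_simps)
    finally show ?thesis .
  qed
qed

end

lemma measurable_sphere_unif_pair:
  "f \<in> borel_measurable (borel :: ('a::euclidean_space \<times> 'a) measure) \<Longrightarrow>
    f \<in> borel_measurable ((sphere_unif :: 'a measure) \<Otimes>\<^sub>M sphere_unif)"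
  by (metis measurable_cong_sets sets_pair_measure_cong sets_sphere_unif borel_prod)

interpretation real_sphere: isotropic_distribution "sphere_unif :: (real^'n) measure" "\<lambda>x y. x \<bullet> y"
  "real CARD('n)"
proof (rule isotropic_distribution.intro)
  show "prob_space (sphere_unif :: (real^'n) measure)" by (rule prob_space_sphere_unif)
  show "AE x in (sphere_unif :: (real^'n) measure). x \<bullet> x = 1"
    using AE_sphere_unif_norm by (auto elim!: eventually_mono simp: power2_norm_eq_inner[symmetric])
  show "norm (x \<bullet> y) ^ 2 \<le> norm (x \<bullet> x) * norm (y \<bullet> y)" for x y :: "real^'n"
    using Cauchy_Schwarz_ineq[of x y] by simp
  show "(\<lambda>(x, y). x \<bullet> y) \<in> borel_measurable ((sphere_unif :: (real^'n) measure) \<Otimes>\<^sub>M sphere_unif)"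
    by (rule measurable_sphere_unif_pair) (simp add: case_prod_beta' borel_measurable_continuous_onI continuous_intros)
  show "integrable sphere_unif (\<lambda>x. (u \<bullet> x) * (x \<bullet> w))" for u w :: "real^'n"
    using sphere_unif_integrable_coord_product[of u w] by (simp add: inner_commute)
  show "(\<integral>x. (u \<bullet> x) * (x \<bullet> w) \<partial>sphere_unif) = (u \<bullet> w) / of_real (real CARD('n))" for u w :: "real^'n"
    using sphere_unif_second_moment[of u w] by (simp add: inner_commute)
qed

text \<open>Its real part is the Euclidean inner
  product of \<open>\<complex>\<^sup>n = \<real>\<^sup>2\<^sup>n\<close> and its imaginary part is the inner product after rotating the
  first argument by \<open>\<i>\<close>.\<close>
definition cinner :: "complex^'n \<Rightarrow> complex^'n \<Rightarrow> complex" where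
  "cinner x y = (\<Sum>l\<in>UNIV. cnj (x $ l) * y $ l)"

lemma cinner_eq_inner:
  "cinner u x = complex_of_real (u \<bullet> x) + \<i> * complex_of_real ((\<i> *s u) \<bullet> x)"
  by (simp add: cinner_def inner_vec_def inner_complex_def vector_scalar_mult_def complex_eq_iff sum_distrib_left)

lemma cinner_commute: "cinner x y = cnj (cinner y x)"
  by (simp add: cinner_def mult.commute)

lemma cinner_self: "cinner x x = complex_of_real ((norm x)\<^sup>2)"
  by (simp add: cinner_eq_inner power2_norm_eq_inner inner_vec_def inner_complex_def vector_scalar_mult_def)

lemma norm_cinner_le: "norm (cinner x y) \<le> norm x * norm y"
proof -
  have "norm (cinner x y) \<le> (\<Sum>l\<in>UNIV. norm (x $ l) * norm (y $ l))"
    unfolding cinner_def by (rule order.trans[OF norm_sum]) (simp add: norm_mult)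
  also have "\<dots> \<le> L2_set (\<lambda>l. norm (x $ l)) UNIV * L2_set (\<lambda>l. norm (y $ l)) UNIV"
    using L2_set_mult_ineq[of "\<lambda>l. norm (x $ l)" "\<lambda>l. norm (y $ l)" UNIV] by simp
  also have "\<dots> = norm x * norm y" by (simp add: norm_vec_def)
  finally show ?thesis .
qed

lemma complex_sphere_moment:
  fixes u w :: "complex^'n"
  shows "(\<integral>x. cinner u x * cinner x w \<partial>sphere_unif) = cinner u w / of_real (real CARD('n))"
proof -
  let ?iu = "\<i> *s u" and ?iw = "\<i> *s w"
  define f where "f x = (x \<bullet> u) * (x \<bullet> w) + (x \<bullet> ?iu) * (x \<bullet> ?iw)" for x :: "complex^'n"
  define g where "g x = (x \<bullet> ?iu) * (x \<bullet> w) - (x \<bullet> u) * (x \<bullet> ?iw)" for x :: "complex^'n"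
  have rotate: "?iu \<bullet> ?iw = u \<bullet> w" "u \<bullet> ?iw = - (?iu \<bullet> w)"
    by (simp_all add: inner_vec_def inner_complex_def vector_scalar_mult_def sum_negf[symmetric] algebra_simps)
  have split: "cinner u x * cinner x w = complex_of_real (f x) + \<i> * complex_of_real (g x)" for x
    by (subst cinner_commute[of x w])
       (simp add: cinner_eq_inner f_def g_def complex_eq_iff inner_commute algebra_simps)
  have int_f: "integrable sphere_unif f" and int_g: "integrable sphere_unif g"
    unfolding f_def g_def by (simp_all add: sphere_unif_integrable_coord_product)
  have int_f_c: "integrable sphere_unif (\<lambda>x. complex_of_real (f x))"
    and int_g_c: "integrable sphere_unif (\<lambda>x. \<i> * complex_of_real (g x))"
    using int_f int_g by simp_all
  have f_mean: "(\<integral>x. f x \<partial>sphere_unif) = 2 * (u \<bullet> w) / DIM(complex^'n)"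
    unfolding f_def
    by (simp add: sphere_unif_integrable_coord_product sphere_unif_second_moment rotate add_divide_distrib)
  have g_mean: "(\<integral>x. g x \<partial>sphere_unif) = 2 * (?iu \<bullet> w) / DIM(complex^'n)"
    unfolding g_def
    by (simp add: sphere_unif_integrable_coord_product sphere_unif_second_moment rotate diff_divide_distrib)
  have "(\<integral>x. cinner u x * cinner x w \<partial>sphere_unif) =
      complex_of_real (\<integral>x. f x \<partial>sphere_unif) + \<i> * complex_of_real (\<integral>x. g x \<partial>sphere_unif)"
    unfolding split Bochner_Integration.integral_add[OF int_f_c int_g_c] by simp
  also have "\<dots> = cinner u w / of_real (real CARD('n))"
    unfolding f_mean g_mean cinner_eq_inner by (simp add: field_simps)
  finally show ?thesis .
qed

interpretation complex_sphere: isotropic_distribution "sphere_unif :: (complex^'n) measure" cinner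
  "real CARD('n)"
proof (rule isotropic_distribution.intro)
  show "prob_space (sphere_unif :: (complex^'n) measure)" by (rule prob_space_sphere_unif)
  show "AE x in (sphere_unif :: (complex^'n) measure). cinner x x = 1"
    using AE_sphere_unif_norm by (auto elim!: eventually_mono simp: cinner_self)
  show "norm (cinner x y) ^ 2 \<le> norm (cinner x x) * norm (cinner y y)" for x y :: "complex^'n"
    using power_mono[OF norm_cinner_le[of x y] norm_ge_zero, of 2]
    by (simp add: cinner_self power_mult_distrib norm_power del: of_real_power)
  have "continuous_on UNIV (\<lambda>z::(complex^'n) \<times> (complex^'n). cinner (fst z) (snd z))"
    unfolding cinner_def by (intro continuous_intros)
  then show "(\<lambda>(x, y). cinner x y) \<in> borel_measurable ((sphere_unif :: (complex^'n) measure) \<Otimes>\<^sub>M sphere_unif)"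
    by (intro measurable_sphere_unif_pair) (simp add: case_prod_beta' borel_measurable_continuous_onI)
  show "integrable sphere_unif (\<lambda>x. cinner u x * cinner x w)" for u w :: "complex^'n"
  proof (rule sphere_unif_integrable_bounded[where B="norm u * norm w"])
    show "(\<lambda>x. cinner u x * cinner x w) \<in> borel_measurable borel"
      unfolding cinner_def by (intro borel_measurable_continuous_onI continuous_intros)
    fix x :: "complex^'n" assume "norm x = 1"
    then show "norm (cinner u x * cinner x w) \<le> norm u * norm w"
      using mult_mono[OF norm_cinner_le[of u x] norm_cinner_le[of x w]] by (simp add: norm_mult)
  qed
  show "(\<integral>x. cinner u x * cinner x w \<partial>sphere_unif) = cinner u w / of_real (real CARD('n))"
    for u w :: "complex^'n"
    by (rule complex_sphere_moment)
qed

lemma exp_det_eq_leibniz: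
  "exp_det ip c TYPE('k::finite) =
    (\<integral>P. leibniz_det UNIV (id_plus_gram ip c P) \<partial>PiM (UNIV :: 'k set) (\<lambda>_. sphere_unif))"
  unfolding exp_det_def by (simp add: leibniz_det_def id_plus_gram_def det_def)

lemma D_real_eq_D_seq: "D_real c TYPE('n::finite) TYPE('k::finite) = D_seq (real CARD('n)) c CARD('k)"
  unfolding D_real_def exp_det_eq_leibniz using real_sphere.expected_gram_det[where 'n='n, of "UNIV :: 'k set" c] by simp

lemma D_complex_eq_D_seq:
  "D_complex c TYPE('n::finite) TYPE('k::finite) = complex_of_real (D_seq (real CARD('n)) c CARD('k))"
proof -
  have "(\<lambda>(x::complex^'n) y. \<Sum>l\<in>UNIV. cnj (x $ l) * y $ l) = cinner"
    by (simp add: fun_eq_iff cinner_def)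
  then show ?thesis
    unfolding D_complex_def exp_det_eq_leibniz using complex_sphere.expected_gram_det[where 'n='n, of "UNIV :: 'k set" c] by simp
qed

lemma D_seq_closed_forms:
  assumes n: "n \<noteq> 0"
  shows "D_seq n c 1 = 1 + c"
    "D_seq n c 2 = (1 + c)^2 - c^2 * (1 / n)"
    "D_seq n c 3 = (1 + c)^3 - c^2 * (1 + c) * (3 / n) + c^3 * (2 / n^2)"
    "D_seq n c 4 = (1 + c)^4 - c^2 * (1 + c)^2 * (6 / n) + c^3 * (1 + c) * (8 / n^2)
        - c^4 * (6 / n^3 - 3 / n^2)"
    "D_seq n c 5 = (1 + c)^5 - c^2 * (1 + c)^3 * (10 / n) + c^3 * (1 + c)^2 * (20 / n^2)
        - c^4 * (1 + c) * (30 / n^3 - 15 / n^2) + c^5 * (24 / n^4 - 20 / n^3)"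
  using n by (simp_all add: eval_nat_numeral field_simps)

theorem mainTheorem5:
  fixes c :: real and n :: real
  assumes "c > 0" and "n = real CARD('n::finite)"
  shows
   "D_real c TYPE('n) TYPE(1) = 1 + c \<and>
    D_real c TYPE('n) TYPE(2) = (1 + c)^2 - c^2 * (1 / n) \<and>
    D_real c TYPE('n) TYPE(3) = (1 + c)^3 - c^2 * (1 + c) * (3 / n) + c^3 * (2 / n^2) \<and>
    D_real c TYPE('n) TYPE(4) = (1 + c)^4 - c^2 * (1 + c)^2 * (6 / n) + c^3 * (1 + c) * (8 / n^2)
        - c^4 * (6 / n^3 - 3 / n^2) \<and>
    D_real c TYPE('n) TYPE(5) = (1 + c)^5 - c^2 * (1 + c)^3 * (10 / n) + c^3 * (1 + c)^2 * (20 / n^2)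
        - c^4 * (1 + c) * (30 / n^3 - 15 / n^2) + c^5 * (24 / n^4 - 20 / n^3) \<and>
    D_complex c TYPE('n) TYPE(1) = complex_of_real (1 + c) \<and>
    D_complex c TYPE('n) TYPE(2) = complex_of_real ((1 + c)^2 - c^2 * (1 / n)) \<and>
    D_complex c TYPE('n) TYPE(3) = complex_of_real ((1 + c)^3 - c^2 * (1 + c) * (3 / n) + c^3 * (2 / n^2)) \<and>
    D_complex c TYPE('n) TYPE(4) = complex_of_real ((1 + c)^4 - c^2 * (1 + c)^2 * (6 / n)
        + c^3 * (1 + c) * (8 / n^2) - c^4 * (6 / n^3 - 3 / n^2)) \<and>
    D_complex c TYPE('n) TYPE(5) = complex_of_real ((1 + c)^5 - c^2 * (1 + c)^3 * (10 / n)
        + c^3 * (1 + c)^2 * (20 / n^2) - c^4 * (1 + c) * (30 / n^3 - 15 / n^2)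
        + c^5 * (24 / n^4 - 20 / n^3))"
proof -
  have "n \<noteq> 0" using assms(2) by simp
  then show ?thesis
    unfolding D_real_eq_D_seq D_complex_eq_D_seq assms(2)[symmetric]
    using D_seq_closed_forms[of n c] by simp
qed

end
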